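(* There exist sequences $(\lambda_n)_{n\ge0}$ of positive numbers and $(b_n)_{n\ge0}$ of real numbers such that the classical Jacobi matrix $(Ju)(n)=\lambda_nu(n+1)+b_nu(n)+\lambda_{n-1}u(n-1)$ is not essentially selfadjoint, while the classical Jacobi matrix $(J'u)(n)=\lambda_nu(n+1)+\lambda_{n-1}u(n-1)$ is essentially selfadjoint (both considered in $\ell^2(\mathbb N_0)$ with domain the finitely supported sequences, and with the convention $\lambda_{-1}u(-1)=0$). *)

theory Defs
  imports Complex_Main
begin

text \<open>The Hilbert space l2(N0) is modelled as square-summable functions nat => complex.
  Operators (possibly unbounded, possibly multivalued) are represented by their graphs,
  i.e. sets of pairs (u, Tu).\<close>

definition l2 :: "(nat \<Rightarrow> complex) \<Rightarrow> bool" where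
  "l2 u \<longleftrightarrow> summable (\<lambda>n. (cmod (u n))\<^sup>2)"

definition l2_inner :: "(nat \<Rightarrow> complex) \<Rightarrow> (nat \<Rightarrow> complex) \<Rightarrow> complex" where
  "l2_inner u v = (\<Sum>n. u n * cnj (v n))"

definition l2_dist_sq :: "(nat \<Rightarrow> complex) \<Rightarrow> (nat \<Rightarrow> complex) \<Rightarrow> real" where
  "l2_dist_sq u v = (\<Sum>n. (cmod (u n - v n))\<^sup>2)"

definition adjoint_graph ::
  "((nat \<Rightarrow> complex) \<times> (nat \<Rightarrow> complex)) set \<Rightarrow> ((nat \<Rightarrow> complex) \<times> (nat \<Rightarrow> complex)) set" where
  "adjoint_graph G = {(v, w). l2 v \<and> l2 w \<and> (\<forall>(u, x) \<in> G. l2_inner x v = l2_inner u w)}"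

definition closure_graph ::
  "((nat \<Rightarrow> complex) \<times> (nat \<Rightarrow> complex)) set \<Rightarrow> ((nat \<Rightarrow> complex) \<times> (nat \<Rightarrow> complex)) set" where
  "closure_graph G = {(u, v). l2 u \<and> l2 v \<and>
     (\<exists>f g. (\<forall>k. (f k, g k) \<in> G) \<and>
            (\<lambda>k. l2_dist_sq (f k) u) \<longlonglongrightarrow> 0 \<and> (\<lambda>k. l2_dist_sq (g k) v) \<longlonglongrightarrow> 0)}"

definition self_adjoint_graph ::
  "((nat \<Rightarrow> complex) \<times> (nat \<Rightarrow> complex)) set \<Rightarrow> bool" where
  "self_adjoint_graph G \<longleftrightarrow> adjoint_graph G = G"

definition essentially_self_adjoint ::
  "((nat \<Rightarrow> complex) \<times> (nat \<Rightarrow> complex)) set \<Rightarrow> bool" where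
  "essentially_self_adjoint G \<longleftrightarrow> self_adjoint_graph (closure_graph G)"

definition jacobi_apply ::
  "(nat \<Rightarrow> real) \<Rightarrow> (nat \<Rightarrow> real) \<Rightarrow> (nat \<Rightarrow> complex) \<Rightarrow> nat \<Rightarrow> complex" where
  "jacobi_apply lam b u n =
     of_real (lam n) * u (Suc n) + of_real (b n) * u n
     + (if n = 0 then 0 else of_real (lam (n - 1)) * u (n - 1))"

definition jacobi_graph ::
  "(nat \<Rightarrow> real) \<Rightarrow> (nat \<Rightarrow> real) \<Rightarrow> ((nat \<Rightarrow> complex) \<times> (nat \<Rightarrow> complex)) set" where
  "jacobi_graph lam b = {(u, jacobi_apply lam b u) | u. finite {n. u n \<noteq> 0}}"

end

theory Submission
  imports Defs
begin

text \<open>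
  The adjoint of the closure of the minimal Jacobi operator is the maximal one, so a
  non-real eigenvector in \<open>l\<^sup>2\<close> of the maximal operator obstructs essential
  self-adjointness. Given a nowhere vanishing square-summable \<open>v\<close> whose Wronskians satisfy
  \<open>\<lambda>\<^sub>n Im (v\<^sub>n\<^sub>+\<^sub>1 v\<^sub>n\<^sup>*) = \<Sum>\<^sub>j\<^sub>\<le>\<^sub>n |v\<^sub>j|\<^sup>2\<close>, the equation \<open>J v = i v\<close> can be solved for
  a real diagonal \<open>b\<close>.

  For the zero diagonal, a vector \<open>u\<close> of the maximal domain lies in the closure as soon as
  the boundary terms \<open>\<lambda>\<^sub>N u\<^sub>N\<close> and \<open>\<lambda>\<^sub>N u\<^sub>N\<^sub>+\<^sub>1\<close> vanish along a subsequence. If the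
  weights alternately jump up by a factor \<open>\<ge> 4\<close> and down by a factor \<open>\<ge> 2\<close>, with
  \<open>\<lambda>\<^sub>2\<^sub>k = O(2\<^sup>k)\<close>, then \<open>J' u = w\<close> makes the boundary terms at even \<open>N\<close> solutions of a
  contracting and of an expanding recursion driven by \<open>w\<close>, hence square summable.
  A geometric vector with alternating phases produces weights of exactly this kind.
\<close>

lemma l2_finite_support: "finite {n. u n \<noteq> 0} \<Longrightarrow> l2 u"
  unfolding l2_def by (rule summable_finite) auto

lemma power2_sum_le: "((a::real) + b)^2 \<le> 2*a^2 + 2*b^2"
  using sum_squares_bound[of a b] by (simp add: power2_sum)

lemma norm_diff_power2_le: "(cmod (a - b))^2 \<le> 2*(cmod a)^2 + 2*(cmod b)^2"
proof -
  have "(cmod (a - b))^2 \<le> (cmod a + cmod b)^2"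
    by (simp add: power_mono norm_triangle_ineq4)
  also have "\<dots> \<le> 2*(cmod a)^2 + 2*(cmod b)^2" by (rule power2_sum_le)
  finally show ?thesis .
qed

lemma l2_diff:
  assumes "l2 u" "l2 v"
  shows "l2 (\<lambda>n. u n - v n)"
  unfolding l2_def
proof (rule summable_comparison_test)
  show "\<exists>N. \<forall>n\<ge>N. norm ((cmod (u n - v n))^2) \<le> 2*(cmod (u n))^2 + 2*(cmod (v n))^2"
    using norm_diff_power2_le by simp
  show "summable (\<lambda>n. 2*(cmod (u n))^2 + 2*(cmod (v n))^2)"
    using assms unfolding l2_def by (intro summable_add summable_mult)
qed

lemma l2_scale: "l2 u \<Longrightarrow> l2 (\<lambda>n. c * u n)"
  unfolding l2_def by (simp add: norm_mult power_mult_distrib summable_mult)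

lemma l2_reindex:
  assumes "l2 u" "inj g"
  shows "l2 (\<lambda>k. u (g k))"
  unfolding l2_def
proof (rule summableI_nonneg_bounded)
  fix K
  have "(\<Sum>k<K. (cmod (u (g k)))^2) = (\<Sum>n\<in>g ` {..<K}. (cmod (u n))^2)"
    using assms(2) by (simp add: sum.reindex inj_on_def)
  also have "\<dots> \<le> (\<Sum>n. (cmod (u n))^2)"
    using assms(1) unfolding l2_def by (intro sum_le_suminf) auto
  finally show "(\<Sum>k<K. (cmod (u (g k)))^2) \<le> (\<Sum>n. (cmod (u n))^2)" .
qed simp

lemma l2_component_bound: "l2 u \<Longrightarrow> (cmod (u n))^2 \<le> (\<Sum>m. (cmod (u m))^2)"
  using sum_le_suminf[of "\<lambda>m. (cmod (u m))^2" "{n}"] unfolding l2_def by simp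

lemma l2_tendsto_zero: "l2 u \<Longrightarrow> u \<longlonglongrightarrow> 0"
proof -
  assume "l2 u"
  then have "(\<lambda>n. sqrt ((cmod (u n))^2)) \<longlonglongrightarrow> 0"
    unfolding l2_def using tendsto_real_sqrt[OF summable_LIMSEQ_zero] by fastforce
  then show "u \<longlonglongrightarrow> 0" by (simp add: tendsto_norm_zero_iff)
qed

lemma summable_l2_product_norm:
  assumes "l2 u" "l2 v"
  shows "summable (\<lambda>n. cmod (u n) * cmod (v n))"
proof (rule summable_comparison_test)
  show "\<exists>N. \<forall>n\<ge>N. norm (cmod (u n) * cmod (v n)) \<le> ((cmod (u n))^2 + (cmod (v n))^2)/2"
  proof (intro exI allI impI)
    fix n
    show "norm (cmod (u n) * cmod (v n)) \<le> ((cmod (u n))^2 + (cmod (v n))^2)/2"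
      using sum_squares_bound[of "cmod (u n)" "cmod (v n)"] by simp
  qed
  show "summable (\<lambda>n. ((cmod (u n))^2 + (cmod (v n))^2)/2)"
    using assms unfolding l2_def by (intro summable_add summable_divide)
qed

lemma summable_l2_product:
  assumes "l2 u" "l2 v"
  shows "summable (\<lambda>n. u n * cnj (v n))"
  by (rule summable_norm_cancel) (use summable_l2_product_norm[OF assms] in \<open>simp add: norm_mult\<close>)

lemma l2_inner_self_eq_zero_iff: "l2 u \<Longrightarrow> l2_inner u u = 0 \<longleftrightarrow> u = (\<lambda>_. 0)"
proof -
  assume u: "l2 u"
  have "l2_inner u u = (\<Sum>n. of_real ((cmod (u n))^2))"
    unfolding l2_inner_def complex_norm_square ..
  also have "\<dots> = of_real (\<Sum>n. (cmod (u n))^2)"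
    using u unfolding l2_def by (rule suminf_of_real[symmetric])
  finally have "l2_inner u u = 0 \<longleftrightarrow> (\<Sum>n. (cmod (u n))^2) = 0"
    by (simp only: of_real_eq_0_iff)
  also have "\<dots> \<longleftrightarrow> (\<forall>n. (cmod (u n))^2 = 0)"
    using u unfolding l2_def by (simp add: suminf_eq_zero_iff)
  finally show ?thesis by (simp add: fun_eq_iff)
qed

lemma l2_inner_indicator: "l2_inner (\<lambda>m. if m = n then 1 else 0) z = cnj (z n)"
proof -
  have "l2_inner (\<lambda>m. if m = n then 1 else 0) z = (\<Sum>m\<in>{n}. (if m = n then 1 else 0) * cnj (z m))"
    unfolding l2_inner_def by (rule suminf_finite) auto
  then show ?thesis by simp
qed

lemma l2_tendsto_pointwise:
  assumes "\<And>k. l2 (f k)" "l2 u" "(\<lambda>k. l2_dist_sq (f k) u) \<longlonglongrightarrow> 0"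
  shows "(\<lambda>k. f k n) \<longlonglongrightarrow> u n"
proof -
  have le: "norm (f k n - u n) \<le> sqrt (l2_dist_sq (f k) u)" for k
    using l2_component_bound[OF l2_diff[OF assms(1)[of k] assms(2)], of n]
    unfolding l2_dist_sq_def by (simp add: real_le_rsqrt)
  have "(\<lambda>k. sqrt (l2_dist_sq (f k) u)) \<longlonglongrightarrow> 0"
    using tendsto_real_sqrt[OF assms(3)] by simp
  with le have "(\<lambda>k. norm (f k n - u n)) \<longlonglongrightarrow> 0"
    by (auto intro: real_tendsto_sandwich[of "\<lambda>_. 0" _ _ "\<lambda>k. sqrt (l2_dist_sq (f k) u)"])
  then show ?thesis by (simp add: tendsto_norm_zero_iff LIM_zero_iff)
qed

text \<open>Cauchy--Schwarz is replaced by the weighted AM--GM inequality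
  \<open>x y \<le> x\<^sup>2/(2e) + e y\<^sup>2/2\<close>, with the weight \<open>e\<close> chosen later.\<close>
lemma l2_inner_diff_bound:
  assumes "l2 a" "l2 b" "l2 c" "0 < e"
  shows "cmod (l2_inner b c - l2_inner a c) \<le> l2_dist_sq b a / (2*e) + e/2 * (\<Sum>n. (cmod (c n))^2)"
proof -
  have ba: "l2 (\<lambda>n. b n - a n)" using l2_diff assms by blast
  then have sb: "summable (\<lambda>n. (cmod (b n - a n))^2)" and sc: "summable (\<lambda>n. (cmod (c n))^2)"
    using assms(3) unfolding l2_def by auto
  have amgm: "x * y \<le> x^2/(2*e) + e/2 * y^2" for x y :: real
  proof -
    have "2*e*(x*y) \<le> x^2 + e^2*y^2"
      using zero_le_power2[of "x - e*y"] by (simp add: power2_eq_square algebra_simps)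
    then show ?thesis using assms(4) by (simp add: field_simps power2_eq_square)
  qed
  have "l2_inner b c - l2_inner a c = (\<Sum>n. (b n - a n) * cnj (c n))"
    unfolding l2_inner_def
    using suminf_diff[OF summable_l2_product[OF assms(2,3)] summable_l2_product[OF assms(1,3)]]
    by (simp add: algebra_simps)
  also have "cmod \<dots> \<le> (\<Sum>n. cmod (b n - a n) * cmod (c n))"
    using summable_norm[of "\<lambda>n. (b n - a n) * cnj (c n)"] summable_l2_product_norm[OF ba assms(3)]
    by (simp add: norm_mult)
  also have "\<dots> \<le> (\<Sum>n. (cmod (b n - a n))^2/(2*e) + e/2 * (cmod (c n))^2)"
    using amgm summable_l2_product_norm[OF ba assms(3)]
      summable_add[OF summable_divide[OF sb] summable_mult[OF sc]]
    by (rule suminf_le)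
  also have "\<dots> = (\<Sum>n. (cmod (b n - a n))^2/(2*e)) + (\<Sum>n. e/2 * (cmod (c n))^2)"
    by (rule suminf_add[OF summable_divide[OF sb] summable_mult[OF sc], symmetric])
  also have "\<dots> = (\<Sum>n. (cmod (b n - a n))^2)/(2*e) + e/2 * (\<Sum>n. (cmod (c n))^2)"
    by (simp only: suminf_divide[OF sb] suminf_mult[OF sc])
  finally show ?thesis unfolding l2_dist_sq_def .
qed

lemma l2_inner_tendsto:
  assumes "\<And>k. l2 (f k)" "l2 a" "l2 c" "(\<lambda>k. l2_dist_sq (f k) a) \<longlonglongrightarrow> 0"
  shows "(\<lambda>k. l2_inner (f k) c) \<longlonglongrightarrow> l2_inner a c"
proof (rule LIMSEQ_I)
  fix r :: real assume r: "0 < r"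
  define C where "C = (\<Sum>n. (cmod (c n))^2)"
  have "0 \<le> C" unfolding C_def using assms(3) unfolding l2_def by (intro suminf_nonneg) auto
  define e where "e = r / (C + 1)"
  have e: "0 < e" "e * C \<le> r"
    unfolding e_def using r \<open>0 \<le> C\<close> by (auto simp: field_simps)
  obtain k0 where k0: "\<And>k. k \<ge> k0 \<Longrightarrow> norm (l2_dist_sq (f k) a - 0) < r * e"
    using LIMSEQ_D[OF assms(4), of "r * e"] r e by auto
  have "norm (l2_inner (f k) c - l2_inner a c) < r" if "k \<ge> k0" for k
  proof -
    have "norm (l2_inner (f k) c - l2_inner a c) \<le> l2_dist_sq (f k) a / (2*e) + e/2 * C"
      using l2_inner_diff_bound[OF assms(2,1,3) e(1)] unfolding C_def by simp
    also have "\<dots> < r"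
    proof -
      have "l2_dist_sq (f k) a < r * e" using k0[OF that] by simp
      then have "l2_dist_sq (f k) a / (2*e) < r / 2" using e(1) by (simp add: field_simps)
      moreover have "e/2 * C \<le> r / 2" using e(2) by simp
      ultimately show ?thesis by linarith
    qed
    finally show ?thesis .
  qed
  then show "\<exists>k0. \<forall>k\<ge>k0. norm (l2_inner (f k) c - l2_inner a c) < r" by blast
qed

lemma l2_inner_scale_left: "l2 u \<Longrightarrow> l2 v \<Longrightarrow> l2_inner (\<lambda>n. z * u n) v = z * l2_inner u v"
  unfolding l2_inner_def by (simp add: suminf_mult summable_l2_product mult.assoc)

lemma l2_inner_scale_right: "l2 u \<Longrightarrow> l2 v \<Longrightarrow> l2_inner u (\<lambda>n. z * v n) = cnj z * l2_inner u v"
  unfolding l2_inner_def by (simp add: suminf_mult summable_l2_product algebra_simps)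

lemma finite_support_bound:
  fixes u :: "nat \<Rightarrow> 'a::zero"
  assumes "finite {n. u n \<noteq> 0}"
  obtains K where "\<And>n. K \<le> n \<Longrightarrow> u n = 0"
proof -
  obtain K where "\<forall>n\<in>{n. u n \<noteq> 0}. n < K"
    using assms[unfolded finite_nat_set_iff_bounded] by blast
  then show ?thesis using that[of K] by (meson mem_Collect_eq not_le)
qed

lemma jacobi_apply_eq_zero_beyond:
  assumes "\<And>n. K \<le> n \<Longrightarrow> u n = 0" "Suc K \<le> n"
  shows "jacobi_apply lam b u n = 0"
  using assms by (simp add: jacobi_apply_def)

lemma finite_support_jacobi_apply:
  assumes "finite {n. u n \<noteq> 0}"
  shows "finite {n. jacobi_apply lam b u n \<noteq> 0}"
proof -
  obtain K where "\<And>n. K \<le> n \<Longrightarrow> u n = 0" using finite_support_bound[OF assms] by blast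
  then have "{n. jacobi_apply lam b u n \<noteq> 0} \<subseteq> {..K}"
    using jacobi_apply_eq_zero_beyond[of K u _ lam b] by (auto simp: not_less_eq_eq[symmetric])
  then show ?thesis using finite_subset by blast
qed

lemma jacobi_green_formula:
  "(\<Sum>n\<le>K. jacobi_apply lam b u n * cnj (v n)) - (\<Sum>n\<le>K. u n * cnj (jacobi_apply lam b v n))
    = of_real (lam K) * (u (Suc K) * cnj (v K) - u K * cnj (v (Suc K)))"
  by (induction K) (simp_all add: jacobi_apply_def algebra_simps)

lemma jacobi_apply_symmetric:
  assumes "finite {n. u n \<noteq> 0}"
  shows "l2_inner (jacobi_apply lam b u) v = l2_inner u (jacobi_apply lam b v)"
proof -
  obtain K where K: "\<And>n. K \<le> n \<Longrightarrow> u n = 0" using finite_support_bound[OF assms] by blast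
  have "l2_inner (jacobi_apply lam b u) v = (\<Sum>n\<le>K. jacobi_apply lam b u n * cnj (v n))"
    unfolding l2_inner_def
    by (rule suminf_finite) (auto simp: jacobi_apply_eq_zero_beyond[OF K] not_le Suc_le_eq)
  moreover have "l2_inner u (jacobi_apply lam b v) = (\<Sum>n\<le>K. u n * cnj (jacobi_apply lam b v n))"
    unfolding l2_inner_def by (rule suminf_finite) (auto simp: K)
  ultimately show ?thesis
    using jacobi_green_formula[of lam b u v K] K[of K] K[of "Suc K"] by simp
qed

lemma jacobi_apply_tendsto:
  assumes "\<And>n. (\<lambda>k. f k n) \<longlonglongrightarrow> u n"
  shows "(\<lambda>k. jacobi_apply lam b (f k) n) \<longlonglongrightarrow> jacobi_apply lam b u n"
  unfolding jacobi_apply_def by (cases "n = 0") (simp_all add: tendsto_intros assms)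

section \<open>Closure and adjoint of the minimal Jacobi operator\<close>

definition jacobi_max_graph ::
  "(nat \<Rightarrow> real) \<Rightarrow> (nat \<Rightarrow> real) \<Rightarrow> ((nat \<Rightarrow> complex) \<times> (nat \<Rightarrow> complex)) set" where
  "jacobi_max_graph lam b = {(u, jacobi_apply lam b u) | u. l2 u \<and> l2 (jacobi_apply lam b u)}"

lemma closure_jacobi_graph_intro:
  assumes "l2 u" "l2 x" "\<And>k. finite {n. f k n \<noteq> 0}"
    "(\<lambda>k. l2_dist_sq (f k) u) \<longlonglongrightarrow> 0" "(\<lambda>k. l2_dist_sq (jacobi_apply lam b (f k)) x) \<longlonglongrightarrow> 0"
  shows "(u, x) \<in> closure_graph (jacobi_graph lam b)"
proof -
  have graph: "(f k, jacobi_apply lam b (f k)) \<in> jacobi_graph lam b" for k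
    using assms(3) unfolding jacobi_graph_def by blast
  have "\<exists>f g. (\<forall>k. (f k, g k) \<in> jacobi_graph lam b) \<and> (\<lambda>k. l2_dist_sq (f k) u) \<longlonglongrightarrow> 0
      \<and> (\<lambda>k. l2_dist_sq (g k) x) \<longlonglongrightarrow> 0"
    by (rule exI[of _ f], rule exI[of _ "\<lambda>k. jacobi_apply lam b (f k)"], use graph assms(4,5) in blast)
  then show ?thesis
    using assms(1,2) unfolding closure_graph_def by blast
qed

lemma jacobi_graph_subset_closure: "jacobi_graph lam b \<subseteq> closure_graph (jacobi_graph lam b)"
proof clarify
  fix u x assume "(u, x) \<in> jacobi_graph lam b"
  then have u: "finite {n. u n \<noteq> 0}" and x: "x = jacobi_apply lam b u"
    unfolding jacobi_graph_def by auto
  show "(u, x) \<in> closure_graph (jacobi_graph lam b)"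
    using l2_finite_support[OF u] l2_finite_support[OF finite_support_jacobi_apply[OF u]] u
    unfolding x by (rule closure_jacobi_graph_intro[where f="\<lambda>_. u"]) (simp_all add: l2_dist_sq_def)
qed

lemma closure_jacobi_graph_elim:
  assumes "(u, x) \<in> closure_graph (jacobi_graph lam b)"
  obtains f where "l2 u" "l2 x" "\<And>k. finite {n. f k n \<noteq> 0}"
    "(\<lambda>k. l2_dist_sq (f k) u) \<longlonglongrightarrow> 0" "(\<lambda>k. l2_dist_sq (jacobi_apply lam b (f k)) x) \<longlonglongrightarrow> 0"
proof -
  from assms obtain f g where fg: "\<forall>k. (f k, g k) \<in> jacobi_graph lam b"
    "(\<lambda>k. l2_dist_sq (f k) u) \<longlonglongrightarrow> 0" "(\<lambda>k. l2_dist_sq (g k) x) \<longlonglongrightarrow> 0" and "l2 u" "l2 x"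
    unfolding closure_graph_def by blast
  moreover have "g k = jacobi_apply lam b (f k)" and "finite {n. f k n \<noteq> 0}" for k
    using fg(1) unfolding jacobi_graph_def by auto
  ultimately show ?thesis using that[of f] by simp
qed

lemma closure_jacobi_graph_subset_max:
  "closure_graph (jacobi_graph lam b) \<subseteq> jacobi_max_graph lam b"
proof clarify
  fix u x assume "(u, x) \<in> closure_graph (jacobi_graph lam b)"
  then obtain f where u: "l2 u" and x: "l2 x" and f: "\<And>k. finite {n. f k n \<noteq> 0}"
    and fu: "(\<lambda>k. l2_dist_sq (f k) u) \<longlonglongrightarrow> 0"
    and fx: "(\<lambda>k. l2_dist_sq (jacobi_apply lam b (f k)) x) \<longlonglongrightarrow> 0"
    using closure_jacobi_graph_elim by blast
  have "x n = jacobi_apply lam b u n" for n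
  proof (rule LIMSEQ_unique)
    show "(\<lambda>k. jacobi_apply lam b (f k) n) \<longlonglongrightarrow> x n"
      using l2_tendsto_pointwise[OF l2_finite_support[OF finite_support_jacobi_apply[OF f]] x fx] .
    show "(\<lambda>k. jacobi_apply lam b (f k) n) \<longlonglongrightarrow> jacobi_apply lam b u n"
      using l2_tendsto_pointwise[OF l2_finite_support[OF f] u fu] by (rule jacobi_apply_tendsto)
  qed
  then have "x = jacobi_apply lam b u" ..
  then show "(u, x) \<in> jacobi_max_graph lam b"
    using u x unfolding jacobi_max_graph_def by blast
qed

lemma jacobi_max_graph_subset_adjoint:
  "jacobi_max_graph lam b \<subseteq> adjoint_graph (closure_graph (jacobi_graph lam b))"
  unfolding jacobi_max_graph_def
proof clarify
  fix v assume v: "l2 v" and Jv: "l2 (jacobi_apply lam b v)"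
  have "l2_inner x v = l2_inner u (jacobi_apply lam b v)"
    if ux: "(u, x) \<in> closure_graph (jacobi_graph lam b)" for u x
  proof -
    obtain f where u: "l2 u" and x: "l2 x" and f: "\<And>k. finite {n. f k n \<noteq> 0}"
      and fu: "(\<lambda>k. l2_dist_sq (f k) u) \<longlonglongrightarrow> 0"
      and fx: "(\<lambda>k. l2_dist_sq (jacobi_apply lam b (f k)) x) \<longlonglongrightarrow> 0"
      using closure_jacobi_graph_elim[OF ux] by blast
    have "(\<lambda>k. l2_inner (jacobi_apply lam b (f k)) v) \<longlonglongrightarrow> l2_inner x v"
      using l2_finite_support[OF finite_support_jacobi_apply[OF f]] x v fx by (rule l2_inner_tendsto)
    moreover have "(\<lambda>k. l2_inner (f k) (jacobi_apply lam b v)) \<longlonglongrightarrow> l2_inner u (jacobi_apply lam b v)"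
      using l2_finite_support[OF f] u Jv fu by (rule l2_inner_tendsto)
    ultimately show ?thesis
      using jacobi_apply_symmetric[OF f] LIMSEQ_unique by simp
  qed
  then show "(v, jacobi_apply lam b v) \<in> adjoint_graph (closure_graph (jacobi_graph lam b))"
    using v Jv unfolding adjoint_graph_def by auto
qed

lemma adjoint_closure_jacobi_graph_subset_max:
  "adjoint_graph (closure_graph (jacobi_graph lam b)) \<subseteq> jacobi_max_graph lam b"
proof clarify
  fix v w assume vw: "(v, w) \<in> adjoint_graph (closure_graph (jacobi_graph lam b))"
  have "w n = jacobi_apply lam b v n" for n
  proof -
    define e where "e = (\<lambda>m::nat. if m = n then (1::complex) else 0)"
    have e: "finite {m. e m \<noteq> 0}" unfolding e_def by simp
    then have "(e, jacobi_apply lam b e) \<in> closure_graph (jacobi_graph lam b)"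
      using jacobi_graph_subset_closure unfolding jacobi_graph_def by blast
    then have "l2_inner (jacobi_apply lam b e) v = l2_inner e w"
      using vw unfolding adjoint_graph_def by auto
    then have "cnj (jacobi_apply lam b v n) = cnj (w n)"
      unfolding jacobi_apply_symmetric[OF e] unfolding e_def l2_inner_indicator .
    then show ?thesis by simp
  qed
  then have "w = jacobi_apply lam b v" ..
  then show "(v, w) \<in> jacobi_max_graph lam b"
    using vw unfolding adjoint_graph_def jacobi_max_graph_def by blast
qed

lemma adjoint_closure_jacobi_graph:
  "adjoint_graph (closure_graph (jacobi_graph lam b)) = jacobi_max_graph lam b"
  using adjoint_closure_jacobi_graph_subset_max jacobi_max_graph_subset_adjoint by blast

lemma essentially_self_adjoint_jacobi_iff:
  "essentially_self_adjoint (jacobi_graph lam b) \<longleftrightarrow>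
     jacobi_max_graph lam b \<subseteq> closure_graph (jacobi_graph lam b)"
  unfolding essentially_self_adjoint_def self_adjoint_graph_def adjoint_closure_jacobi_graph
  using closure_jacobi_graph_subset_max by blast

lemma not_essentially_self_adjoint_if_eigenvector:
  assumes v: "l2 v" "v \<noteq> (\<lambda>_. 0)" and z: "Im z \<noteq> 0"
    and eigen: "\<And>n. jacobi_apply lam b v n = z * v n"
  shows "\<not> essentially_self_adjoint (jacobi_graph lam b)"
proof
  assume "essentially_self_adjoint (jacobi_graph lam b)"
  have Jv: "jacobi_apply lam b v = (\<lambda>n. z * v n)" using eigen by auto
  have "l2 (jacobi_apply lam b v)" unfolding Jv using v(1) by (rule l2_scale)
  then have max: "(v, jacobi_apply lam b v) \<in> jacobi_max_graph lam b"
    using v(1) unfolding jacobi_max_graph_def by blast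
  then have "(v, jacobi_apply lam b v) \<in> closure_graph (jacobi_graph lam b)"
    using \<open>essentially_self_adjoint _\<close> unfolding essentially_self_adjoint_jacobi_iff by blast
  moreover have "(v, jacobi_apply lam b v) \<in> adjoint_graph (closure_graph (jacobi_graph lam b))"
    using max unfolding adjoint_closure_jacobi_graph .
  ultimately have "l2_inner (\<lambda>n. z * v n) v = l2_inner v (\<lambda>n. z * v n)"
    unfolding adjoint_graph_def Jv by fast
  then have "(z - cnj z) * l2_inner v v = 0"
    using v(1) by (simp add: l2_inner_scale_left l2_inner_scale_right algebra_simps)
  moreover have "z - cnj z \<noteq> 0" using z by (simp add: complex_eq_iff)
  ultimately show False using v l2_inner_self_eq_zero_iff by simp
qed

definition truncate :: "nat \<Rightarrow> (nat \<Rightarrow> complex) \<Rightarrow> nat \<Rightarrow> complex" where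
  "truncate N u n = (if n \<le> N then u n else 0)"

lemma finite_support_truncate: "finite {n. truncate N u n \<noteq> 0}"
  by (rule finite_subset[of _ "{..N}"]) (auto simp: truncate_def)

lemma l2_dist_sq_nonneg: "l2 u \<Longrightarrow> l2 v \<Longrightarrow> 0 \<le> l2_dist_sq u v"
  unfolding l2_dist_sq_def by (rule suminf_nonneg) (use l2_diff in \<open>auto simp: l2_def\<close>)

lemma suminf_tail_tendsto_zero:
  fixes f :: "nat \<Rightarrow> real"
  assumes "summable f"
  shows "(\<lambda>N. \<Sum>n. if n \<le> N then 0 else f n) \<longlonglongrightarrow> 0"
proof -
  have "(\<Sum>n. if n \<le> N then 0 else f n) = suminf f - (\<Sum>n\<le>N. f n)" for N
  proof -
    have "(\<lambda>n. if n \<le> N then f n else 0) sums (\<Sum>n\<le>N. f n)"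
      using sums_If_finite_set[of "{..N}" f] by simp
    then have "(\<lambda>n. f n - (if n \<le> N then f n else 0)) sums (suminf f - (\<Sum>n\<le>N. f n))"
      using assms by (intro sums_diff) (simp_all add: summable_sums)
    moreover have "(\<lambda>n. f n - (if n \<le> N then f n else 0)) = (\<lambda>n. if n \<le> N then 0 else f n)"
      by auto
    ultimately show ?thesis by (simp add: sums_iff)
  qed
  moreover have "(\<lambda>N. suminf f - (\<Sum>n\<le>N. f n)) \<longlonglongrightarrow> suminf f - suminf f"
    using assms by (intro tendsto_intros summable_LIMSEQ')
  ultimately show ?thesis by simp
qed

lemma l2_dist_sq_truncate:
  "l2_dist_sq (truncate N u) u = (\<Sum>n. if n \<le> N then 0 else (cmod (u n))^2)"
  unfolding l2_dist_sq_def truncate_def by (rule arg_cong[where f=suminf]) auto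

text \<open>Truncation at \<open>N\<close> leaves \<open>J u\<close> unchanged below \<open>N\<close>, kills it beyond \<open>N + 1\<close>, and at
  \<open>N\<close>, \<open>N + 1\<close> produces the boundary terms \<open>\<lambda>\<^sub>N u\<^sub>N\<^sub>+\<^sub>1\<close>, \<open>\<lambda>\<^sub>N u\<^sub>N\<close>.\<close>
lemma jacobi_apply_truncate_error:
  fixes lam b :: "nat \<Rightarrow> real" and u :: "nat \<Rightarrow> complex"
  defines "w \<equiv> jacobi_apply lam b u"
  shows "(cmod (jacobi_apply lam b (truncate N u) n - w n))^2 \<le>
     (if n = N then (cmod (of_real (lam N) * u (Suc N)))^2 else 0)
   + (if n = Suc N then 2*(cmod (of_real (lam N) * u N))^2 else 0)
   + 2*(if n \<le> N then 0 else (cmod (w n))^2)"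
proof -
  consider "n < N" | "n = N" | "n = Suc N" | "Suc N < n" by linarith
  then show ?thesis
  proof cases
    case 1
    then have "jacobi_apply lam b (truncate N u) n = w n"
      unfolding w_def jacobi_apply_def truncate_def by auto
    then show ?thesis using 1 by simp
  next
    case 2
    then have "jacobi_apply lam b (truncate N u) n - w n = - (of_real (lam N) * u (Suc N))"
      unfolding w_def jacobi_apply_def truncate_def by auto
    then show ?thesis using 2 by (simp only: norm_minus_cancel) simp
  next
    case 3
    then have "jacobi_apply lam b (truncate N u) n - w n = of_real (lam N) * u N - w n"
      unfolding w_def jacobi_apply_def truncate_def by auto
    moreover have "(cmod (of_real (lam N) * u N - w n))^2
        \<le> 2*(cmod (of_real (lam N) * u N))^2 + 2*(cmod (w n))^2"
      by (rule norm_diff_power2_le)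
    ultimately show ?thesis using 3 by simp
  next
    case 4
    then have "jacobi_apply lam b (truncate N u) n = 0"
      unfolding jacobi_apply_def truncate_def by auto
    then show ?thesis using 4 by simp
  qed
qed

lemma l2_dist_sq_jacobi_apply_truncate:
  assumes w: "l2 (jacobi_apply lam b u)"
  shows "l2_dist_sq (jacobi_apply lam b (truncate N u)) (jacobi_apply lam b u) \<le>
     (cmod (of_real (lam N) * u (Suc N)))^2 + 2*(cmod (of_real (lam N) * u N))^2
   + 2*(\<Sum>n. if n \<le> N then 0 else (cmod (jacobi_apply lam b u n))^2)"
proof -
  define p where "p = (cmod (of_real (lam N) * u (Suc N)))^2"
  define q where "q = 2*(cmod (of_real (lam N) * u N))^2"
  define T where "T = (\<lambda>n. if n \<le> N then 0 else (cmod (jacobi_apply lam b u n))^2)"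
  have "summable T"
    unfolding T_def using w unfolding l2_def
    by (rule summable_comparison_test[rotated]) auto
  then have bound: "(\<lambda>n. (if n = N then p else 0) + (if n = Suc N then q else 0) + 2 * T n)
      sums (p + q + 2 * suminf T)"
    using sums_single[of N "\<lambda>_. p"] sums_single[of "Suc N" "\<lambda>_. q"]
    by (intro sums_add sums_mult summable_sums) simp_all
  have diff: "summable (\<lambda>n. (cmod (jacobi_apply lam b (truncate N u) n - jacobi_apply lam b u n))^2)"
    using l2_diff[OF l2_finite_support[OF finite_support_jacobi_apply[OF finite_support_truncate]] w]
    unfolding l2_def .
  have pointwise: "(cmod (jacobi_apply lam b (truncate N u) n - jacobi_apply lam b u n))^2
      \<le> (if n = N then p else 0) + (if n = Suc N then q else 0) + 2 * T n" for n
    unfolding p_def q_def T_def by (rule jacobi_apply_truncate_error)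
  have "l2_dist_sq (jacobi_apply lam b (truncate N u)) (jacobi_apply lam b u) \<le> p + q + 2 * suminf T"
    unfolding l2_dist_sq_def by (rule sums_le[OF pointwise summable_sums[OF diff] bound])
  then show ?thesis unfolding p_def q_def T_def .
qed

text \<open>The discrete counterpart of the vanishing of the Wronskian at infinity; the
  approximants are the truncations of \<open>u\<close>.\<close>
lemma in_closure_jacobi_graph_if_boundary_tendsto_zero:
  assumes u: "l2 u" and w: "l2 (jacobi_apply lam b u)" and N: "strict_mono N"
    and p: "(\<lambda>k. of_real (lam (N k)) * u (Suc (N k))) \<longlonglongrightarrow> 0"
    and q: "(\<lambda>k. of_real (lam (N k)) * u (N k)) \<longlonglongrightarrow> 0"
  shows "(u, jacobi_apply lam b u) \<in> closure_graph (jacobi_graph lam b)"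
proof -
  define f where "f k = truncate (N k) u" for k
  define tail where "tail k = (\<Sum>n. if n \<le> N k then 0 else (cmod (jacobi_apply lam b u n))^2)" for k
  have f: "finite {n. f k n \<noteq> 0}" for k
    unfolding f_def by (rule finite_support_truncate)
  have fu: "(\<lambda>k. l2_dist_sq (f k) u) \<longlonglongrightarrow> 0"
    unfolding f_def l2_dist_sq_truncate
    using LIMSEQ_subseq_LIMSEQ[OF suminf_tail_tendsto_zero N] u
    by (simp add: l2_def o_def)
  have Jf: "(\<lambda>k. l2_dist_sq (jacobi_apply lam b (f k)) (jacobi_apply lam b u)) \<longlonglongrightarrow> 0"
  proof (rule real_tendsto_sandwich)
    show "\<forall>\<^sub>F k in sequentially. 0 \<le> l2_dist_sq (jacobi_apply lam b (f k)) (jacobi_apply lam b u)"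
      using l2_dist_sq_nonneg[OF l2_finite_support[OF finite_support_jacobi_apply[OF f]] w] by simp
    show "\<forall>\<^sub>F k in sequentially. l2_dist_sq (jacobi_apply lam b (f k)) (jacobi_apply lam b u)
        \<le> (cmod (of_real (lam (N k)) * u (Suc (N k))))^2 + 2*(cmod (of_real (lam (N k)) * u (N k)))^2
          + 2 * tail k"
      unfolding f_def tail_def using l2_dist_sq_jacobi_apply_truncate[OF w] by simp
    have p2: "(\<lambda>k. (cmod (of_real (lam (N k)) * u (Suc (N k))))^2) \<longlonglongrightarrow> 0"
      using tendsto_power[OF tendsto_norm_zero[OF p], of 2] by simp
    have q2: "(\<lambda>k. (cmod (of_real (lam (N k)) * u (N k)))^2) \<longlonglongrightarrow> 0"
      using tendsto_power[OF tendsto_norm_zero[OF q], of 2] by simp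
    have "tail \<longlonglongrightarrow> 0"
      unfolding tail_def using LIMSEQ_subseq_LIMSEQ[OF suminf_tail_tendsto_zero N] w
      by (simp add: l2_def o_def)
    show "(\<lambda>k. (cmod (of_real (lam (N k)) * u (Suc (N k))))^2
        + 2*(cmod (of_real (lam (N k)) * u (N k)))^2 + 2 * tail k) \<longlonglongrightarrow> 0"
      using tendsto_add[OF tendsto_add[OF p2 tendsto_mult_right_zero[OF q2]]
          tendsto_mult_right_zero[OF \<open>tail \<longlonglongrightarrow> 0\<close>]]
      by simp
  qed simp
  show ?thesis
    using u w f fu Jf by (rule closure_jacobi_graph_intro)
qed

section \<open>Two scalar recursions\<close>

lemma l2_contracting_recursion:
  fixes p \<omega> :: "nat \<Rightarrow> complex" and c :: "nat \<Rightarrow> real"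
  assumes rec: "\<And>k. p (Suc k) = of_real (c k) * (\<omega> k - p k)"
    and c: "\<And>k. 0 \<le> c k" "\<And>k. c k \<le> 1/2" and \<omega>: "l2 \<omega>"
  shows "l2 p"
proof -
  define W where "W = (\<Sum>k. (cmod (\<omega> k))^2)"
  define P where "P K = (\<Sum>k<K. (cmod (p k))^2)" for K
  have W: "(\<Sum>k<K. (cmod (\<omega> k))^2) \<le> W" for K
    unfolding W_def using \<omega> unfolding l2_def by (intro sum_le_suminf) auto
  have step: "(cmod (p (Suc k)))^2 \<le> ((cmod (\<omega> k))^2 + (cmod (p k))^2) / 2" for k
  proof -
    have "cmod (p (Suc k)) = c k * cmod (\<omega> k - p k)" using rec c by (simp add: norm_mult)
    also have "\<dots> \<le> 1/2 * (cmod (\<omega> k) + cmod (p k))"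
      using c(1,2)[of k] norm_triangle_ineq4[of "\<omega> k" "p k"] by (intro mult_mono) auto
    finally have "(cmod (p (Suc k)))^2 \<le> ((cmod (\<omega> k) + cmod (p k)) / 2)^2"
      by (simp add: power_mono)
    also have "\<dots> \<le> ((cmod (\<omega> k))^2 + (cmod (p k))^2) / 2"
      using power2_sum_le[of "cmod (\<omega> k)" "cmod (p k)"] by (simp add: power_divide)
    finally show ?thesis .
  qed
  have "P (Suc K) \<le> 2 * (cmod (p 0))^2 + W" for K
  proof -
    have "P K \<le> P (Suc K)" unfolding P_def by simp
    have "P (Suc K) = (cmod (p 0))^2 + (\<Sum>k<K. (cmod (p (Suc k)))^2)"
      unfolding P_def by (rule sum.lessThan_Suc_shift)
    also have "\<dots> \<le> (cmod (p 0))^2 + (\<Sum>k<K. ((cmod (\<omega> k))^2 + (cmod (p k))^2) / 2)"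
      using step by (simp add: sum_mono)
    also have "\<dots> = (cmod (p 0))^2 + (\<Sum>k<K. (cmod (\<omega> k))^2) / 2 + P K / 2"
      unfolding P_def by (simp add: sum.distrib sum_divide_distrib add_divide_distrib)
    also have "\<dots> \<le> (cmod (p 0))^2 + W / 2 + P (Suc K) / 2"
      using W[of K] \<open>P K \<le> P (Suc K)\<close> by linarith
    finally show ?thesis by simp
  qed
  then have "P K \<le> 2 * (cmod (p 0))^2 + W" for K
    using W[of 0] by (cases K) (auto simp: P_def)
  then show ?thesis
    unfolding l2_def P_def by (intro summableI_nonneg_bounded) auto
qed

text \<open>The a priori growth bound rules out the solutions that grow like \<open>\<Prod> R\<^sub>k\<close>, which
  leaves only bounded ones.\<close>
lemma bounded_expanding_recursion:
  fixes q \<omega> :: "nat \<Rightarrow> complex" and R :: "nat \<Rightarrow> real"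
  assumes rec: "\<And>k. q (Suc k) = \<omega> k - of_real (R k) * q k"
    and R: "\<And>k. 4 \<le> R k" and \<omega>: "\<And>k. cmod (\<omega> k) \<le> B"
    and growth: "\<And>k. cmod (q k) \<le> C * 2^k"
  shows "cmod (q k) \<le> B"
proof (rule ccontr)
  assume "\<not> cmod (q k) \<le> B"
  then have big: "B < cmod (q k)" by simp
  have step: "3 * cmod (q m) \<le> cmod (q (Suc m))" if "B \<le> cmod (q m)" for m
  proof -
    have "R m * cmod (q m) - cmod (\<omega> m) \<le> cmod (q (Suc m))"
      using rec[of m] R[of m] norm_triangle_ineq2[of "of_real (R m) * q m" "\<omega> m"]
      by (simp add: norm_mult norm_minus_commute)
    moreover have "4 * cmod (q m) \<le> R m * cmod (q m)"
      using R[of m] by (simp add: mult_right_mono)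
    ultimately show ?thesis using \<omega>[of m] that by linarith
  qed
  have grow: "3^j * cmod (q k) \<le> cmod (q (k + j))" for j
  proof (induction j)
    case (Suc j)
    have "1 * cmod (q k) \<le> 3^j * cmod (q k)" by (rule mult_right_mono) simp_all
    then have "B \<le> cmod (q (k + j))" using Suc.IH big by linarith
    then show ?case using Suc.IH step[of "k + j"] by simp
  qed simp
  obtain j where j: "C * 2^k / cmod (q k) < (3/2 :: real)^j"
    using real_arch_pow[of "3/2" "C * 2^k / cmod (q k)"] by auto
  have "3^j * cmod (q k) \<le> (C * 2^k) * 2^j"
    using grow[of j] growth[of "k + j"] by (simp add: power_add mult.assoc)
  then have "(3/2 :: real)^j * cmod (q k) \<le> C * 2^k"
    by (simp add: power_divide field_simps)
  moreover have "0 < cmod (q k)" using big \<omega>[of 0] norm_ge_zero[of "\<omega> 0"] by linarith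
  ultimately have "(3/2 :: real)^j \<le> C * 2^k / cmod (q k)"
    by (simp add: pos_le_divide_eq)
  then show False using j by simp
qed

lemma l2_expanding_recursion:
  fixes q \<omega> :: "nat \<Rightarrow> complex" and R :: "nat \<Rightarrow> real"
  assumes rec: "\<And>k. q (Suc k) = \<omega> k - of_real (R k) * q k"
    and R: "\<And>k. 4 \<le> R k" and \<omega>: "l2 \<omega>"
    and growth: "\<And>k. cmod (q k) \<le> C * 2^k"
  shows "l2 q"
proof -
  define W where "W = (\<Sum>k. (cmod (\<omega> k))^2)"
  define Q where "Q K = (\<Sum>k<K. (cmod (q k))^2)" for K
  have W: "(\<Sum>k<K. (cmod (\<omega> k))^2) \<le> W" for K
    unfolding W_def using \<omega> unfolding l2_def by (intro sum_le_suminf) auto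
  have "cmod (\<omega> k) \<le> sqrt W" for k
    unfolding W_def using l2_component_bound[OF \<omega>] by (simp add: real_le_rsqrt)
  then have bounded: "(cmod (q k))^2 \<le> W" for k
    using bounded_expanding_recursion[OF rec R _ growth] by (metis norm_ge_zero power_mono real_sqrt_le_iff real_sqrt_unique)
  have step: "(cmod (q k))^2 \<le> ((cmod (\<omega> k))^2 + (cmod (q (Suc k)))^2) / 8" for k
  proof -
    have "4 * cmod (q k) \<le> R k * cmod (q k)"
      using R[of k] by (simp add: mult_right_mono)
    also have "R k * cmod (q k) = cmod (\<omega> k - q (Suc k))"
      using rec[of k] R[of k] by (simp add: norm_mult)
    also have "\<dots> \<le> cmod (\<omega> k) + cmod (q (Suc k))" by (rule norm_triangle_ineq4)
    finally have "(cmod (q k))^2 \<le> ((cmod (\<omega> k) + cmod (q (Suc k))) / 4)^2"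
      by (simp add: power_mono)
    also have "\<dots> \<le> ((cmod (\<omega> k))^2 + (cmod (q (Suc k)))^2) / 8"
      using power2_sum_le[of "cmod (\<omega> k)" "cmod (q (Suc k))"] by (simp add: power_divide)
    finally show ?thesis .
  qed
  have "Q K \<le> 2 * W / 7" for K
  proof -
    have "Q K \<le> (\<Sum>k<K. ((cmod (\<omega> k))^2 + (cmod (q (Suc k)))^2) / 8)"
      unfolding Q_def using step by (rule sum_mono)
    also have "\<dots> = (\<Sum>k<K. (cmod (\<omega> k))^2) / 8 + (Q (Suc K) - (cmod (q 0))^2) / 8"
      unfolding Q_def sum.lessThan_Suc_shift by (simp add: sum.distrib sum_divide_distrib add_divide_distrib)
    also have "\<dots> \<le> W / 8 + (Q K + W) / 8"
    proof -
      have "Q (Suc K) = Q K + (cmod (q K))^2" unfolding Q_def by simp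
      then show ?thesis
        using W[of K] bounded[of K] zero_le_power2[of "cmod (q 0)"] by argo
    qed
    finally show ?thesis by argo
  qed
  then show ?thesis
    unfolding l2_def Q_def by (intro summableI_nonneg_bounded[where x="2 * W / 7"]) auto
qed

section \<open>Essential self-adjointness of an off-diagonal Jacobi matrix\<close>

text \<open>For \<open>b = 0\<close> the equation \<open>J u = w\<close> turns the boundary terms into solutions of
  first order recursions driven by \<open>w\<close>: \<open>p\<^sub>k = \<lambda>\<^sub>2\<^sub>k u\<^sub>2\<^sub>k\<close> is contracted by the factor
  \<open>\<lambda>\<^sub>2\<^sub>k\<^sub>+\<^sub>2/\<lambda>\<^sub>2\<^sub>k\<^sub>+\<^sub>1\<close> and \<open>q\<^sub>k = \<lambda>\<^sub>2\<^sub>k u\<^sub>2\<^sub>k\<^sub>+\<^sub>1\<close> is expanded by \<open>\<lambda>\<^sub>2\<^sub>k\<^sub>+\<^sub>1/\<lambda>\<^sub>2\<^sub>k\<close>.\<close>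
lemma l2_offdiagonal_jacobi_even_boundary:
  fixes lam :: "nat \<Rightarrow> real"
  assumes pos: "\<And>n. lam n > 0"
    and contract: "\<And>k. lam (Suc (Suc (2*k))) \<le> lam (Suc (2*k)) / 2"
    and w: "l2 (jacobi_apply lam (\<lambda>_. 0) u)"
  shows "l2 (\<lambda>k. of_real (lam (2*k)) * u (2*k))"
proof (rule l2_contracting_recursion)
  let ?w = "jacobi_apply lam (\<lambda>_. 0) u"
  show "of_real (lam (2 * Suc k)) * u (2 * Suc k) = of_real (lam (Suc (Suc (2*k))) / lam (Suc (2*k)))
      * (?w (Suc (2*k)) - of_real (lam (2*k)) * u (2*k))" for k
    using pos[of "Suc (2*k)"] by (simp add: jacobi_apply_def field_simps)
  show "0 \<le> lam (Suc (Suc (2*k))) / lam (Suc (2*k))" for k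
    using pos[of "Suc (Suc (2*k))"] pos[of "Suc (2*k)"] by simp
  show "lam (Suc (Suc (2*k))) / lam (Suc (2*k)) \<le> 1/2" for k
    using contract[of k] pos[of "Suc (2*k)"] by (simp add: field_simps)
  show "l2 (\<lambda>k. ?w (Suc (2*k)))"
    using w by (rule l2_reindex) (simp add: inj_def)
qed

lemma l2_offdiagonal_jacobi_odd_boundary:
  fixes lam :: "nat \<Rightarrow> real" and A :: real
  assumes pos: "\<And>n. lam n > 0"
    and expand: "\<And>k. 4 * lam (2*k) \<le> lam (Suc (2*k))"
    and growth: "\<And>k. lam (2*k) \<le> A * 2^k"
    and u: "l2 u" and w: "l2 (jacobi_apply lam (\<lambda>_. 0) u)"
  shows "l2 (\<lambda>k. of_real (lam (2*k)) * u (Suc (2*k)))"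
proof (rule l2_expanding_recursion)
  let ?w = "jacobi_apply lam (\<lambda>_. 0) u"
  show "of_real (lam (2 * Suc k)) * u (Suc (2 * Suc k)) = ?w (Suc (Suc (2*k)))
      - of_real (lam (Suc (2*k)) / lam (2*k)) * (of_real (lam (2*k)) * u (Suc (2*k)))" for k
    using pos[of "2*k"] by (simp add: jacobi_apply_def field_simps)
  show "4 \<le> lam (Suc (2*k)) / lam (2*k)" for k
    using expand[of k] pos[of "2*k"] by (simp add: field_simps)
  show "l2 (\<lambda>k. ?w (Suc (Suc (2*k))))"
    using w by (rule l2_reindex) (simp add: inj_def)
  show "cmod (of_real (lam (2*k)) * u (Suc (2*k))) \<le> A * sqrt (\<Sum>n. (cmod (u n))^2) * 2^k" for k
  proof -
    have "cmod (of_real (lam (2*k)) * u (Suc (2*k))) = lam (2*k) * cmod (u (Suc (2*k)))"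
      using pos[of "2*k"] by (simp add: norm_mult)
    also have "\<dots> \<le> (A * 2^k) * sqrt (\<Sum>n. (cmod (u n))^2)"
      using growth[of k] pos[of "2*k"] l2_component_bound[OF u, of "Suc (2*k)"]
      by (intro mult_mono) (auto simp: real_le_rsqrt)
    finally show ?thesis by (simp add: algebra_simps)
  qed
qed

lemma essentially_self_adjoint_offdiagonal_jacobi:
  fixes lam :: "nat \<Rightarrow> real" and A :: real
  assumes pos: "\<And>n. lam n > 0"
    and contract: "\<And>k. lam (Suc (Suc (2*k))) \<le> lam (Suc (2*k)) / 2"
    and expand: "\<And>k. 4 * lam (2*k) \<le> lam (Suc (2*k))"
    and growth: "\<And>k. lam (2*k) \<le> A * 2^k"
  shows "essentially_self_adjoint (jacobi_graph lam (\<lambda>_. 0))"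
  unfolding essentially_self_adjoint_jacobi_iff jacobi_max_graph_def
proof clarify
  fix u assume u: "l2 u" and w: "l2 (jacobi_apply lam (\<lambda>_. 0) u)"
  show "(u, jacobi_apply lam (\<lambda>_. 0) u) \<in> closure_graph (jacobi_graph lam (\<lambda>_. 0))"
  proof (rule in_closure_jacobi_graph_if_boundary_tendsto_zero[OF u w])
    show "strict_mono (\<lambda>k::nat. 2*k)" by (rule strict_monoI) simp
    show "(\<lambda>k. of_real (lam (2*k)) * u (2*k)) \<longlonglongrightarrow> 0"
      using l2_offdiagonal_jacobi_even_boundary[OF pos contract w] by (rule l2_tendsto_zero)
    show "(\<lambda>k. of_real (lam (2*k)) * u (Suc (2*k))) \<longlonglongrightarrow> 0"
      using l2_offdiagonal_jacobi_odd_boundary[OF pos expand growth u w] by (rule l2_tendsto_zero)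
  qed
qed

definition eigen_diagonal :: "(nat \<Rightarrow> real) \<Rightarrow> (nat \<Rightarrow> complex) \<Rightarrow> nat \<Rightarrow> real" where
  "eigen_diagonal lam v n = Re ((\<i> * v n - of_real (lam n) * v (Suc n)
     - (if n = 0 then 0 else of_real (lam (n - 1)) * v (n - 1))) / v n)"

text \<open>The hypothesis identifies the Wronskian \<open>\<lambda>\<^sub>n Im (v\<^sub>n\<^sub>+\<^sub>1 v\<^sub>n\<^sup>*)\<close> with
  \<open>\<Sum>\<^sub>j\<^sub>\<le>\<^sub>n |v\<^sub>j|\<^sup>2\<close>; taking differences, the quotient defining the diagonal entry
  is real, so no information is lost by taking its real part.\<close>
lemma jacobi_apply_eigen_diagonal:
  fixes v :: "nat \<Rightarrow> complex" and lam :: "nat \<Rightarrow> real"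
  assumes nonzero: "\<And>n. v n \<noteq> 0"
    and wronskian: "\<And>n. lam n * Im (v (Suc n) * cnj (v n)) = (\<Sum>j\<le>n. (cmod (v j))^2)"
  shows "jacobi_apply lam (eigen_diagonal lam v) v n = \<i> * v n"
proof -
  define Y where "Y = \<i> * v n - of_real (lam n) * v (Suc n)
     - (if n = 0 then 0 else of_real (lam (n - 1)) * v (n - 1))"
  have "Im (Y * cnj (v n)) = 0"
  proof (cases n)
    case 0
    then show ?thesis
      using wronskian[of 0] unfolding Y_def
      by (simp add: algebra_simps complex_norm_square[symmetric] power2_eq_square)
  next
    case (Suc m)
    have "Im (v m * cnj (v n)) = - Im (v n * cnj (v m))" by (simp add: algebra_simps)
    then have "Im (Y * cnj (v n))
        = (cmod (v n))^2 - lam n * Im (v (Suc n) * cnj (v n)) + lam m * Im (v (Suc m) * cnj (v m))"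
      unfolding Y_def using Suc by (simp add: algebra_simps complex_norm_square[symmetric] power2_eq_square)
    then show ?thesis
      unfolding wronskian using Suc by simp
  qed
  then have "Im (Y / v n) = 0"
    by (subst complex_div_cnj) (simp add: Im_divide_of_real)
  then have "of_real (eigen_diagonal lam v n) = Y / v n"
    unfolding eigen_diagonal_def Y_def by (simp add: complex_eq_iff)
  then show ?thesis
    using nonzero[of n] unfolding jacobi_apply_def Y_def by (simp add: field_simps)
qed

section \<open>The example\<close>

text \<open>Since \<open>|ex_alpha|\<^sup>2 = 1/2\<close>, the vector is square summable, and the Wronskian terms
  \<open>Im (v\<^sub>n\<^sub>+\<^sub>1 v\<^sub>n\<^sup>*)\<close> equal \<open>2\<^sup>-\<^sup>k/4\<close> and \<open>2\<^sup>-\<^sup>k/40\<close> alternately; this makes the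
  weights \<open>\<lambda>\<^sub>n\<close> oscillate as required by the self-adjointness criterion above.\<close>
definition ex_alpha :: complex where "ex_alpha = Complex (-1/10) (7/10)"

definition ex_beta :: complex where "ex_beta = Complex 0 (1/4)"

definition ex_vector :: "nat \<Rightarrow> complex" where
  "ex_vector n = (if even n then ex_alpha ^ (n div 2) else ex_beta * ex_alpha ^ (n div 2))"

definition ex_mass :: "nat \<Rightarrow> real" where
  "ex_mass n = (\<Sum>j\<le>n. (cmod (ex_vector j))^2)"

definition ex_lambda :: "nat \<Rightarrow> real" where
  "ex_lambda n = ex_mass n / Im (ex_vector (Suc n) * cnj (ex_vector n))"

lemma ex_alpha_power_cnj: "ex_alpha^k * cnj ex_alpha^k = of_real ((1/2)^k)"
proof -
  have "ex_alpha * cnj ex_alpha = of_real (1/2)" by (simp add: ex_alpha_def complex_eq_iff)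
  then have "(ex_alpha * cnj ex_alpha)^k = of_real ((1/2)^k)" by (simp only: of_real_power)
  then show ?thesis by (simp only: power_mult_distrib)
qed

lemma norm_ex_vector_even: "(cmod (ex_vector (2*k)))^2 = (1/2)^k"
proof -
  have "of_real ((cmod (ex_vector (2*k)))^2) = ex_alpha^k * cnj ex_alpha^k"
    unfolding complex_norm_square by (simp add: ex_vector_def)
  then show ?thesis unfolding ex_alpha_power_cnj of_real_eq_iff .
qed

lemma norm_ex_vector_odd: "(cmod (ex_vector (Suc (2*k))))^2 = (1/16) * (1/2)^k"
proof -
  have "of_real ((cmod (ex_vector (Suc (2*k))))^2) = (ex_beta * cnj ex_beta) * (ex_alpha^k * cnj ex_alpha^k)"
    unfolding complex_norm_square by (simp add: ex_vector_def algebra_simps)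
  also have "\<dots> = of_real ((1/16) * (1/2)^k)"
    unfolding ex_alpha_power_cnj by (simp add: ex_beta_def complex_eq_iff)
  finally show ?thesis by (simp only: of_real_eq_iff)
qed

lemma Im_ex_vector_even: "Im (ex_vector (Suc (2*k)) * cnj (ex_vector (2*k))) = (1/4) * (1/2)^k"
proof -
  have "ex_vector (Suc (2*k)) * cnj (ex_vector (2*k)) = ex_beta * of_real ((1/2)^k)"
    unfolding ex_alpha_power_cnj[symmetric] by (simp add: ex_vector_def algebra_simps)
  then show ?thesis by (simp add: ex_beta_def)
qed

lemma Im_ex_vector_odd: "Im (ex_vector (Suc (Suc (2*k))) * cnj (ex_vector (Suc (2*k)))) = (1/40) * (1/2)^k"
proof -
  have "ex_vector (Suc (Suc (2*k))) * cnj (ex_vector (Suc (2*k)))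
      = (ex_alpha * cnj ex_beta) * of_real ((1/2)^k)"
    unfolding ex_alpha_power_cnj[symmetric] by (simp add: ex_vector_def algebra_simps)
  moreover have "ex_alpha * cnj ex_beta = Complex (7/40) (1/40)"
    by (simp add: ex_alpha_def ex_beta_def complex_eq_iff)
  ultimately show ?thesis by simp
qed

lemma nat_parity_cases: obtains k where "n = 2*k" | k where "n = Suc (2*k)"
  by (metis oddE evenE Suc_eq_plus1)

lemma Im_ex_vector_pos: "0 < Im (ex_vector (Suc n) * cnj (ex_vector n))"
proof (cases n rule: nat_parity_cases)
  case (1 k)
  show ?thesis unfolding 1 Im_ex_vector_even by simp
next
  case (2 k)
  show ?thesis unfolding 2 Im_ex_vector_odd by simp
qed

lemma ex_vector_nonzero: "ex_vector n \<noteq> 0"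
proof -
  have "ex_alpha \<noteq> 0" "ex_beta \<noteq> 0" by (simp_all add: ex_alpha_def ex_beta_def complex_eq_iff)
  then show ?thesis by (simp add: ex_vector_def)
qed

lemma l2_ex_vector: "l2 ex_vector"
  unfolding l2_def
proof (rule summable_comparison_test)
  show "\<exists>N. \<forall>n\<ge>N. norm ((cmod (ex_vector n))^2) \<le> (3/4)^n"
  proof (intro exI allI impI)
    fix n
    have le: "(1/2::real)^k \<le> (3/4)^(2*k)" for k
      unfolding power_mult by (rule power_mono) (simp_all add: power2_eq_square)
    show "norm ((cmod (ex_vector n))^2) \<le> (3/4)^n"
    proof (cases n rule: nat_parity_cases)
      case (1 k)
      then show ?thesis using le[of k] by (simp add: norm_ex_vector_even)
    next
      case (2 k)
      have "(1/16) * (1/2::real)^k \<le> (3/4) * (3/4)^(2*k)"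
        using le[of k] by (intro mult_mono) simp_all
      then show ?thesis using 2 by (simp add: norm_ex_vector_odd)
    qed
  qed
qed (simp add: summable_geometric)

lemma ex_mass_mono: "m \<le> n \<Longrightarrow> ex_mass m \<le> ex_mass n"
  unfolding ex_mass_def by (rule sum_mono2) auto

lemma ex_mass_ge_1: "1 \<le> ex_mass n"
  using ex_mass_mono[of 0 n] by (simp add: ex_mass_def ex_vector_def)

lemma ex_mass_le: "ex_mass n \<le> (\<Sum>j. (cmod (ex_vector j))^2)"
  unfolding ex_mass_def by (rule sum_le_suminf) (use l2_ex_vector in \<open>auto simp: l2_def\<close>)

lemma ex_lambda_pos: "0 < ex_lambda n"
  unfolding ex_lambda_def using ex_mass_ge_1[of n] Im_ex_vector_pos[of n] by simp

lemma ex_lambda_wronskian: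
  "ex_lambda n * Im (ex_vector (Suc n) * cnj (ex_vector n)) = (\<Sum>j\<le>n. (cmod (ex_vector j))^2)"
  unfolding ex_lambda_def ex_mass_def using Im_ex_vector_pos[of n] by simp

lemma ex_lambda_contract: "ex_lambda (Suc (Suc (2*k))) \<le> ex_lambda (Suc (2*k)) / 2"
proof -
  have "(cmod (ex_vector (2*k)))^2 \<le> ex_mass (Suc (2*k))"
    unfolding ex_mass_def by (rule member_le_sum) auto
  moreover have "ex_mass (Suc (Suc (2*k))) = ex_mass (Suc (2*k)) + (1/2)^Suc k"
    using norm_ex_vector_even[of "Suc k"] by (simp add: ex_mass_def)
  ultimately have "ex_mass (Suc (Suc (2*k))) \<le> 2 * ex_mass (Suc (2*k))"
    unfolding norm_ex_vector_even using ex_mass_ge_1[of "Suc (2*k)"] by simp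
  moreover have "2 * Suc k = Suc (Suc (2*k))" by simp
  ultimately show ?thesis
    unfolding ex_lambda_def Im_ex_vector_odd Im_ex_vector_even[of "Suc k", unfolded \<open>2 * Suc k = _\<close>]
    using ex_mass_ge_1[of "Suc (2*k)"] by (simp add: field_simps)
qed

lemma ex_lambda_expand: "4 * ex_lambda (2*k) \<le> ex_lambda (Suc (2*k))"
  unfolding ex_lambda_def Im_ex_vector_even Im_ex_vector_odd
  using ex_mass_mono[of "2*k" "Suc (2*k)"] ex_mass_ge_1[of "2*k"] by (simp add: field_simps)

lemma ex_lambda_growth: "ex_lambda (2*k) \<le> 4 * (\<Sum>j. (cmod (ex_vector j))^2) * 2^k"
proof -
  have "ex_lambda (2*k) = 4 * 2^k * ex_mass (2*k)"
    unfolding ex_lambda_def Im_ex_vector_even by (simp add: field_simps power_divide)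
  then show ?thesis using ex_mass_le[of "2*k"] by simp
qed

theorem lemma5:
  shows "\<exists>lam b :: nat \<Rightarrow> real. (\<forall>n. lam n > 0) \<and>
           \<not> essentially_self_adjoint (jacobi_graph lam b) \<and>
           essentially_self_adjoint (jacobi_graph lam (\<lambda>_. 0))"
proof (intro exI conjI)
  show "\<forall>n. ex_lambda n > 0" using ex_lambda_pos by blast
  show "\<not> essentially_self_adjoint (jacobi_graph ex_lambda (eigen_diagonal ex_lambda ex_vector))"
  proof (rule not_essentially_self_adjoint_if_eigenvector)
    show "jacobi_apply ex_lambda (eigen_diagonal ex_lambda ex_vector) ex_vector n = \<i> * ex_vector n" for n
      using ex_vector_nonzero ex_lambda_wronskian by (rule jacobi_apply_eigen_diagonal)
  qed (use l2_ex_vector ex_vector_nonzero in \<open>auto simp: fun_eq_iff\<close>)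
  show "essentially_self_adjoint (jacobi_graph ex_lambda (\<lambda>_. 0))"
    using ex_lambda_pos ex_lambda_contract ex_lambda_expand ex_lambda_growth
    by (rule essentially_self_adjoint_offdiagonal_jacobi)
qed

end
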